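(* Let $X,Y$ be Banach spaces, $f:X\to Y$ a function, $G:Y\rightrightarrows X$ a multifunction, $L,M>0$, and $(\overline{x},\overline{y},\overline{z})\in X\times Y\times Y$ with $\overline{y}=f(\overline{x})$ and $(\overline{z},\overline{x})\in\operatorname{Gr}G$. Suppose: (i) $f$ is Lipschitz continuous around $\overline{x}$; (ii) $\operatorname{Gr}G$ is locally closed around $(\overline{z},\overline{x})$; (iii) $f$ is $L$-open around $(\overline{x},\overline{y})$; (iv) $G$ is $M$-open around $(\overline{z},\overline{x})$; (v) $LM>1$. Then $f-G^{-1}$ is $(L-M^{-1})$-open around $(\overline{x},\overline{y}-\overline{z})$.
   Context: $B(x,r)$ denotes the open ball. $(f-G^{-1})(x)=\{f(x)-z: x\in G(z)\}$. A set-valued map $T:U\rightrightarrows V$ (a function being viewed as a single-valued map) is $L$-open around $(a,b)\in\operatorname{Gr}T$ if there exist $\varepsilon>0$ and neighborhoods $U_0$ of $a$, $V_0$ of $b$ such that for every $\rho\in]0,\varepsilon[$ and every $(u,v)\in\operatorname{Gr}T\cap(U_0\times V_0)$, $B(v,\rho L)\subset T(B(u,\rho))$. $\operatorname{Gr}G$ locally closed around a point means that its intersection with the closure of some neighborhood of that point is closed. *)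

theory Defs
  imports "HOL-Analysis.Analysis"
begin

definition graph :: "('a \<Rightarrow> 'b set) \<Rightarrow> ('a \<times> 'b) set" where
  "graph T = {(u, v). v \<in> T u}"

definition lin_open_around ::
  "('a::metric_space \<Rightarrow> 'b::real_normed_vector set) \<Rightarrow> real \<Rightarrow> 'a \<Rightarrow> 'b \<Rightarrow> bool" where
  "lin_open_around T L a b \<longleftrightarrow>
     (\<exists>\<epsilon>>0. \<exists>U0 V0. a \<in> interior U0 \<and> b \<in> interior V0 \<and>
        (\<forall>\<rho>. 0 < \<rho> \<and> \<rho> < \<epsilon> \<longrightarrow>
           (\<forall>u v. (u, v) \<in> graph T \<inter> (U0 \<times> V0) \<longrightarrow>
              ball v (\<rho> * L) \<subseteq> \<Union> (T ` ball u \<rho>))))"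

definition single_valued_map :: "('a \<Rightarrow> 'b) \<Rightarrow> 'a \<Rightarrow> 'b set" where
  "single_valued_map f = (\<lambda>x. {f x})"

definition minus_inverse :: "('a \<Rightarrow> 'b::ab_group_add) \<Rightarrow> ('b \<Rightarrow> 'a set) \<Rightarrow> 'a \<Rightarrow> 'b set" where
  "minus_inverse f G = (\<lambda>x. {f x - z | z. x \<in> G z})"

definition lipschitz_around :: "('a::metric_space \<Rightarrow> 'b::metric_space) \<Rightarrow> 'a \<Rightarrow> bool" where
  "lipschitz_around f a \<longleftrightarrow> (\<exists>U K. a \<in> interior U \<and> K-lipschitz_on U f)"

definition locally_closed_around :: "'a::topological_space set \<Rightarrow> 'a \<Rightarrow> bool" where
  "locally_closed_around S p \<longleftrightarrow> (\<exists>W. p \<in> interior W \<and> closed (S \<inter> closure W))"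

end

theory Submission
  imports Defs
begin

text \<open>Given \<open>u \<in> G z\<close> and a target \<open>w\<close> near \<open>v = f u - z\<close>, solve \<open>w = f x - z'\<close> by
  iteration. Openness of \<open>f\<close> removes the residual \<open>r = w - f x + z'\<close> by a step of \<open>x\<close> of size
  \<open>|r| / L\<close>; openness of \<open>G\<close> then follows this step with a move of \<open>z'\<close> of size \<open>|r| / (L M)\<close>,
  and this move is the new residual. The residuals thus shrink geometrically with ratio
  \<open>1 / (L M) < 1\<close>, the iterates converge, local closedness of the graph of \<open>G\<close> and continuity
  of \<open>f\<close> pass the equation to the limit, and the total displacement of \<open>x\<close> is
  \<open>|w - v| / (L - 1 / M)\<close>. The strict inequalities in the definition of openness are absorbed
  by running the iteration with slightly smaller rates \<open>L' < L\<close> and \<open>M' < M\<close>.\<close>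

lemma convergent_if_geometric_increments:
  fixes X :: "nat \<Rightarrow> 'a::banach"
  assumes "0 \<le> c" "c < 1" and "\<And>n. dist (X (Suc n)) (X n) \<le> K * c ^ n"
  shows "convergent X"
proof -
  have "summable (\<lambda>n. K * c ^ n)"
    using assms(1,2) by (intro summable_mult summable_geometric) simp
  then have "summable (\<lambda>n. X (Suc n) - X n)"
    by (rule summable_comparison_test'[where N = 0]) (use assms(3) in \<open>simp add: dist_norm\<close>)
  then have "(\<lambda>n. X 0 + (\<Sum>i<n. X (Suc i) - X i)) \<longlonglongrightarrow> X 0 + (\<Sum>i. X (Suc i) - X i)"
    by (intro tendsto_add tendsto_const summable_LIMSEQ)
  then show ?thesis
    by (auto simp: sum_lessThan_telescope convergent_def)
qed

lemma geometric_sum_le: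
  fixes c K r :: real
  assumes "0 \<le> c" "c < 1" "0 \<le> K" "K \<le> (1 - c) * r"
  shows "K * (\<Sum>i<n. c ^ i) \<le> r"
proof -
  have "(\<Sum>i<n. c ^ i) \<le> 1 / (1 - c)"
    using sum_le_suminf[of "\<lambda>i. c ^ i" "{..<n}"] summable_geometric[of c] suminf_geometric[of c] assms
    by simp
  from mult_left_mono[OF this assms(3)] have "K * (\<Sum>i<n. c ^ i) \<le> K / (1 - c)"
    by simp
  also have "\<dots> \<le> r" using assms by (simp add: divide_le_eq mult.commute)
  finally show ?thesis .
qed

context
  fixes f :: "'x::banach \<Rightarrow> 'y::banach" and G :: "'y \<Rightarrow> 'x set"
    and L c A rx rz :: real and u :: 'x and z w :: 'y
  assumes L: "0 < L" and c: "0 \<le> c" "c < 1"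
    and start: "u \<in> G z" "norm (w - (f u - z)) \<le> A"
    and radii: "A \<le> L * (1 - c) * rx" "c * A \<le> (1 - c) * rz"
    and step: "\<And>x z' r. x \<in> G z' \<Longrightarrow> x \<in> cball u rx \<Longrightarrow> z' \<in> cball z rz \<Longrightarrow> norm r \<le> A \<Longrightarrow>
      \<exists>x' z''. x' \<in> G z'' \<and> f x' = f x + r \<and> dist x' x \<le> norm r / L \<and> dist z'' z' \<le> c * norm r"
begin

lemma iterate_in_cballs:
  assumes "dist u x \<le> A / L * (\<Sum>i<n. c ^ i)" "dist z z' \<le> c * A * (\<Sum>i<n. c ^ i)"
  shows "x \<in> cball u rx" "z' \<in> cball z rz"
proof -
  have "0 \<le> A" using start(2) norm_ge_zero order_trans by blast
  have "A / L * (\<Sum>i<n. c ^ i) \<le> rx"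
    using \<open>0 \<le> A\<close> radii(1) L by (intro geometric_sum_le[OF c]) (simp_all add: divide_le_eq mult_ac)
  moreover have "c * A * (\<Sum>i<n. c ^ i) \<le> rz"
    using \<open>0 \<le> A\<close> radii(2) c by (intro geometric_sum_le[OF c]) simp_all
  ultimately show "x \<in> cball u rx" "z' \<in> cball z rz" using assms by auto
qed

text \<open>Correcting the residual \<open>w - f x + z'\<close> through \<open>f\<close> leaves the new residual \<open>z'' - z'\<close>,
  which the step hypothesis makes \<open>c\<close> times smaller.\<close>

lemma iterate_step:
  assumes "x \<in> G z'" and res: "norm (w - f x + z') \<le> c ^ n * A"
    and dx: "dist u x \<le> A / L * (\<Sum>i<n. c ^ i)" and dz: "dist z z' \<le> c * A * (\<Sum>i<n. c ^ i)"
  obtains x' z'' where "x' \<in> G z''" "norm (w - f x' + z'') \<le> c ^ Suc n * A"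
    "dist x' x \<le> A / L * c ^ n" "dist z'' z' \<le> c * A * c ^ n"
    "dist u x' \<le> A / L * (\<Sum>i<Suc n. c ^ i)" "dist z z'' \<le> c * A * (\<Sum>i<Suc n. c ^ i)"
proof -
  define r where "r = w - f x + z'"
  have "c ^ n * A \<le> A"
    using c start(2) by (simp add: mult_left_le_one_le power_le_one order_trans[OF norm_ge_zero])
  with res have "norm r \<le> A" by (simp add: r_def)
  with step[OF \<open>x \<in> G z'\<close> iterate_in_cballs[OF dx dz]] obtain x' z'' where
    new: "x' \<in> G z''" "f x' = f x + r" "dist x' x \<le> norm r / L" "dist z'' z' \<le> c * norm r"
    by blast
  have dx': "dist x' x \<le> A / L * c ^ n"
    using new(3) divide_right_mono[OF res, of L] L unfolding r_def by (simp add: mult.commute)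
  have dz': "dist z'' z' \<le> c * A * c ^ n"
    using new(4) mult_left_mono[OF res c(1)] by (simp add: r_def mult_ac)
  have "w - f x' + z'' = z'' - z'"
    using new(2) by (simp add: r_def algebra_simps)
  then have "norm (w - f x' + z'') \<le> c ^ Suc n * A" using dz' by (simp add: dist_norm mult_ac)
  moreover have "dist u x' \<le> A / L * (\<Sum>i<Suc n. c ^ i)"
    using dist_triangle[of u x' x] dx dx' by (simp add: distrib_left dist_commute)
  moreover have "dist z z'' \<le> c * A * (\<Sum>i<Suc n. c ^ i)"
    using dist_triangle[of z z'' z'] dz dz' by (simp add: distrib_left dist_commute)
  ultimately show thesis using that new(1) dx' dz' by blast
qed

lemma approximating_sequences:
  obtains xs zs where "\<And>n. xs n \<in> G (zs n)" "\<And>n. xs n \<in> cball u rx" "\<And>n. zs n \<in> cball z rz"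
    "\<And>n. norm (w - f (xs n) + zs n) \<le> c ^ n * A"
    "\<And>n. dist (xs (Suc n)) (xs n) \<le> A / L * c ^ n" "\<And>n. dist (zs (Suc n)) (zs n) \<le> c * A * c ^ n"
proof -
  define P where "P n = (\<lambda>(x, z'). x \<in> G z' \<and> norm (w - f x + z') \<le> c ^ n * A
    \<and> dist u x \<le> A / L * (\<Sum>i<n. c ^ i) \<and> dist z z' \<le> c * A * (\<Sum>i<n. c ^ i))" for n
  define Q where "Q n = (\<lambda>(x :: 'x, z' :: 'y) (x', z''). dist x' x \<le> A / L * c ^ n \<and> dist z'' z' \<le> c * A * c ^ n)"
    for n
  have "\<exists>s. \<forall>n. P n (s n) \<and> Q n (s n) (s (Suc n))"
  proof (rule dependent_nat_choice)
    show "\<exists>p. P 0 p" using start by (auto simp: P_def algebra_simps)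
  next
    fix p n assume "P n p"
    then obtain x z' where p: "p = (x, z')" and current: "x \<in> G z'" "norm (w - f x + z') \<le> c ^ n * A"
      "dist u x \<le> A / L * (\<Sum>i<n. c ^ i)" "dist z z' \<le> c * A * (\<Sum>i<n. c ^ i)"
      by (cases p) (auto simp: P_def)
    from current obtain x' z'' where "x' \<in> G z''" "norm (w - f x' + z'') \<le> c ^ Suc n * A"
      "dist x' x \<le> A / L * c ^ n" "dist z'' z' \<le> c * A * c ^ n"
      "dist u x' \<le> A / L * (\<Sum>i<Suc n. c ^ i)" "dist z z'' \<le> c * A * (\<Sum>i<Suc n. c ^ i)"
      by (rule iterate_step)
    then show "\<exists>q. P (Suc n) q \<and> Q n p q"
      by (intro exI[of _ "(x', z'')"]) (simp add: P_def Q_def p)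
  qed
  then obtain s where s: "\<And>n. P n (s n) \<and> Q n (s n) (s (Suc n))" by blast
  show thesis
  proof (rule that[of "\<lambda>n. fst (s n)" "\<lambda>n. snd (s n)"])
    fix n
    obtain x z' x' z'' where eq: "s n = (x, z')" "s (Suc n) = (x', z'')" by fastforce
    with s[of n] have P: "P n (x, z')" and Q: "Q n (x, z') (x', z'')" by simp_all
    then show "fst (s n) \<in> G (snd (s n))" "norm (w - f (fst (s n)) + snd (s n)) \<le> c ^ n * A"
      "dist (fst (s (Suc n))) (fst (s n)) \<le> A / L * c ^ n"
      "dist (snd (s (Suc n))) (snd (s n)) \<le> c * A * c ^ n"
      by (simp_all add: P_def Q_def eq)
    from P have "dist u x \<le> A / L * (\<Sum>i<n. c ^ i)" "dist z z' \<le> c * A * (\<Sum>i<n. c ^ i)"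
      by (simp_all add: P_def)
    from iterate_in_cballs[OF this] show "fst (s n) \<in> cball u rx" "snd (s n) \<in> cball z rz"
      by (simp_all add: eq)
  qed
qed

lemma iterative_solution:
  assumes cont: "continuous_on (cball u rx) f"
    and closed: "closed (graph G \<inter> cball z rz \<times> cball u rx)"
  shows "\<exists>x z'. x \<in> cball u rx \<and> x \<in> G z' \<and> w = f x - z'"
proof -
  obtain xs zs where G: "\<And>n. xs n \<in> G (zs n)" and balls: "\<And>n. xs n \<in> cball u rx" "\<And>n. zs n \<in> cball z rz"
    and residual: "\<And>n. norm (w - f (xs n) + zs n) \<le> c ^ n * A"
    and dx: "\<And>n. dist (xs (Suc n)) (xs n) \<le> A / L * c ^ n"
    and dz: "\<And>n. dist (zs (Suc n)) (zs n) \<le> c * A * c ^ n"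
    using approximating_sequences by blast
  obtain xl where xl: "xs \<longlonglongrightarrow> xl"
    using convergent_if_geometric_increments[OF c dx] by (auto simp: convergent_def)
  obtain zl where zl: "zs \<longlonglongrightarrow> zl"
    using convergent_if_geometric_increments[OF c dz] by (auto simp: convergent_def)
  have "(zs n, xs n) \<in> graph G \<inter> cball z rz \<times> cball u rx" for n
    using G balls by (simp add: graph_def)
  then have "(zl, xl) \<in> graph G \<inter> cball z rz \<times> cball u rx"
    using closed_sequentially[OF closed _ tendsto_Pair[OF zl xl]] by blast
  then have xl_ball: "xl \<in> cball u rx" and xl_G: "xl \<in> G zl" by (auto simp: graph_def)
  have "(\<lambda>n. w - f (xs n) + zs n) \<longlonglongrightarrow> w - f xl + zl"
    using continuous_on_tendsto_compose[OF cont xl xl_ball] balls zl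
    by (intro tendsto_intros) auto
  moreover have "(\<lambda>n. w - f (xs n) + zs n) \<longlonglongrightarrow> 0"
  proof (rule Lim_null_comparison)
    show "\<forall>\<^sub>F n in sequentially. norm (w - f (xs n) + zs n) \<le> c ^ n * A"
      using residual by simp
    show "(\<lambda>n. c ^ n * A) \<longlonglongrightarrow> 0"
      using c by (intro tendsto_mult_left_zero LIMSEQ_power_zero) simp
  qed
  ultimately have "w = f xl - zl"
    using LIMSEQ_unique by (fastforce simp: algebra_simps)
  with xl_ball xl_G show ?thesis by blast
qed

end

lemma ball_subset_ball_if_dist_le:
  assumes "dist a b + r \<le> s"
  shows "ball a r \<subseteq> ball b s"
proof
  fix x assume "x \<in> ball a r"
  then show "x \<in> ball b s" using assms dist_triangle[of b x a] by (simp add: dist_commute)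
qed

lemma lin_open_around_stepE:
  assumes "lin_open_around T L a b"
  obtains \<epsilon> \<delta> where "0 < \<epsilon>" "0 < \<delta>"
    "\<And>L' u v y. 0 < L' \<Longrightarrow> L' < L \<Longrightarrow> v \<in> T u \<Longrightarrow> u \<in> ball a \<delta> \<Longrightarrow> v \<in> ball b \<delta> \<Longrightarrow>
       dist y v < \<epsilon> * L' \<Longrightarrow> \<exists>u'. dist u' u \<le> dist y v / L' \<and> y \<in> T u'"
proof -
  obtain \<epsilon> U0 V0 where \<epsilon>: "0 < \<epsilon>" and "a \<in> interior U0" "b \<in> interior V0"
    and opens: "\<And>\<rho> u v. 0 < \<rho> \<Longrightarrow> \<rho> < \<epsilon> \<Longrightarrow> (u, v) \<in> graph T \<inter> U0 \<times> V0 \<Longrightarrow>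
      ball v (\<rho> * L) \<subseteq> \<Union> (T ` ball u \<rho>)"
    using assms unfolding lin_open_around_def by blast
  then obtain \<delta>1 \<delta>2 where \<delta>: "0 < \<delta>1" "ball a \<delta>1 \<subseteq> U0" "0 < \<delta>2" "ball b \<delta>2 \<subseteq> V0"
    by (meson mem_interior)
  show thesis
  proof (rule that[OF \<epsilon>, of "min \<delta>1 \<delta>2"])
    fix L' u v y
    assume L': "0 < L'" "L' < L" and "v \<in> T u" "u \<in> ball a (min \<delta>1 \<delta>2)" "v \<in> ball b (min \<delta>1 \<delta>2)"
      and y: "dist y v < \<epsilon> * L'"
    then have uv: "(u, v) \<in> graph T \<inter> U0 \<times> V0"
      using \<delta> by (auto simp: graph_def)
    show "\<exists>u'. dist u' u \<le> dist y v / L' \<and> y \<in> T u'"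
    proof (cases "y = v")
      case True
      with \<open>v \<in> T u\<close> show ?thesis by auto
    next
      case False
      define \<rho> where "\<rho> = dist y v / L'"
      have "0 < \<rho>" "\<rho> < \<epsilon>" using False L' y by (auto simp: \<rho>_def field_simps)
      moreover have "y \<in> ball v (\<rho> * L)"
        using False L' by (simp add: \<rho>_def dist_commute field_simps)
      ultimately obtain u' where "u' \<in> ball u \<rho>" "y \<in> T u'" using opens uv by blast
      then have "dist u' u \<le> \<rho>" "y \<in> T u'" by (simp_all add: dist_commute)
      then show ?thesis unfolding \<rho>_def by blast
    qed
  qed (simp add: \<delta>)
qed

lemma lin_open_around_function_stepE:
  assumes "lin_open_around (single_valued_map f) L a (f a)" and "continuous (at a) f"
  obtains \<epsilon> \<delta> where "0 < \<epsilon>" "0 < \<delta>"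
    "\<And>L' x y. 0 < L' \<Longrightarrow> L' < L \<Longrightarrow> x \<in> ball a \<delta> \<Longrightarrow> dist y (f x) < \<epsilon> * L' \<Longrightarrow>
       \<exists>x'. dist x' x \<le> dist y (f x) / L' \<and> f x' = y"
proof -
  obtain \<epsilon> \<delta> where \<epsilon>: "0 < \<epsilon>" and "0 < \<delta>"
    and opens: "\<And>L' u v y. 0 < L' \<Longrightarrow> L' < L \<Longrightarrow> v \<in> single_valued_map f u \<Longrightarrow> u \<in> ball a \<delta> \<Longrightarrow>
      v \<in> ball (f a) \<delta> \<Longrightarrow> dist y v < \<epsilon> * L' \<Longrightarrow> \<exists>u'. dist u' u \<le> dist y v / L' \<and> y \<in> single_valued_map f u'"
    using lin_open_around_stepE[OF assms(1)] by blast
  obtain \<delta>' where "0 < \<delta>'" and \<delta>': "\<And>x. x \<in> ball a \<delta>' \<Longrightarrow> f x \<in> ball (f a) \<delta>"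
    using assms(2) \<open>0 < \<delta>\<close> unfolding continuous_at_eps_delta by (metis dist_commute mem_ball)
  show thesis
  proof (rule that[OF \<epsilon>, of "min \<delta> \<delta>'"])
    fix L' x y assume "0 < L'" "L' < L" "x \<in> ball a (min \<delta> \<delta>')" "dist y (f x) < \<epsilon> * L'"
    moreover from this(3) have "f x \<in> ball (f a) \<delta>" using \<delta>' by simp
    ultimately show "\<exists>x'. dist x' x \<le> dist y (f x) / L' \<and> f x' = y"
      using opens[of L' "f x" x y] by (auto simp: single_valued_map_def)
  qed (use \<open>0 < \<delta>\<close> \<open>0 < \<delta>'\<close> in simp)
qed

lemma lin_open_around_ballI:
  assumes "0 < \<epsilon>" "0 < \<delta>" "0 < \<eta>"
    and "\<And>\<rho> u v y. 0 < \<rho> \<Longrightarrow> \<rho> < \<epsilon> \<Longrightarrow> v \<in> T u \<Longrightarrow> u \<in> ball a \<delta> \<Longrightarrow> v \<in> ball b \<eta> \<Longrightarrow>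
       dist y v < \<rho> * L \<Longrightarrow> \<exists>u'. dist u' u < \<rho> \<and> y \<in> T u'"
  shows "lin_open_around T L a b"
  unfolding lin_open_around_def
proof (intro exI conjI allI impI subsetI)
  show "a \<in> interior (ball a \<delta>)" "b \<in> interior (ball b \<eta>)" using assms(2,3) by simp_all
  fix \<rho> u v y
  assume "0 < \<rho> \<and> \<rho> < \<epsilon>" "(u, v) \<in> graph T \<inter> ball a \<delta> \<times> ball b \<eta>" "y \<in> ball v (\<rho> * L)"
  then obtain u' where "dist u' u < \<rho>" "y \<in> T u'"
    using assms(4)[where \<rho>=\<rho> and u=u and v=v and y=y] by (auto simp: graph_def dist_commute)
  then show "y \<in> \<Union> (T ` ball u \<rho>)" by (auto simp: dist_commute)
qed (rule assms(1))

lemma lipschitz_around_continuous_on_ball: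
  assumes "lipschitz_around f a"
  obtains \<delta> where "0 < \<delta>" "continuous_on (ball a \<delta>) f"
proof -
  obtain U K where "a \<in> interior U" "K-lipschitz_on U f"
    using assms unfolding lipschitz_around_def by blast
  then obtain \<delta> where "0 < \<delta>" "ball a \<delta> \<subseteq> U" "K-lipschitz_on U f"
    using mem_interior by blast
  then show thesis
    using lipschitz_on_continuous_on lipschitz_on_subset that by metis
qed

lemma locally_closed_around_cball:
  assumes "locally_closed_around S (a, b)"
  obtains \<delta> where "0 < \<delta>" "closed (S \<inter> cball a \<delta> \<times> cball b \<delta>)"
proof -
  obtain W where W: "(a, b) \<in> interior W" "closed (S \<inter> closure W)"
    using assms unfolding locally_closed_around_def by blast
  then obtain e where e: "0 < e" "ball (a, b) e \<subseteq> W"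
    using mem_interior by blast
  have "cball a (e/3) \<times> cball b (e/3) \<subseteq> ball (a, b) e"
  proof clarify
    fix z x assume "z \<in> cball a (e/3)" "x \<in> cball b (e/3)"
    moreover have "dist (a, b) (z, x) \<le> dist a z + dist b x"
      unfolding dist_Pair_Pair by (rule sqrt_sum_squares_le_sum) auto
    ultimately show "(z, x) \<in> ball (a, b) e" using e by simp
  qed
  with e closure_subset have "cball a (e/3) \<times> cball b (e/3) \<subseteq> closure W" by blast
  then have "S \<inter> cball a (e/3) \<times> cball b (e/3) = (S \<inter> closure W) \<inter> cball a (e/3) \<times> cball b (e/3)"
    by blast
  with e W show thesis
    by (intro that[of "e/3"]) (simp_all add: closed_Int closed_Times)
qed

lemma exists_smaller_rates:
  fixes L M s :: real
  assumes "0 < L" "0 < M" "0 \<le> s" "s < L - 1 / M"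
  obtains L' M' where "0 < L'" "L' < L" "M / 2 \<le> M'" "M' < M" "s < L' - 1 / M'"
proof -
  define h where "h = (L - 1 / M - s) / 3"
  have "0 < 1 / M" using assms by simp
  with assms have "0 < L - 1 / M - s" "L - 1 / M - s < 3 * L" by linarith+
  then have h: "0 < h" "h < L" by (simp_all add: h_def)
  define M' where "M' = max (M / 2) (M / (1 + M * h))"
  have "1 < 1 + M * h" using assms h by simp
  then have "M / (1 + M * h) < M / 1" using assms by (intro divide_strict_left_mono) auto
  then have "M / (1 + M * h) < M" by simp
  then have "M / 2 \<le> M'" "M' < M" using assms by (auto simp: M'_def)
  moreover have "1 / M' \<le> 1 / M + h"
  proof -
    have pos: "0 < M / (1 + M * h)" using assms h by (simp add: add_pos_pos)
    have "M / (1 + M * h) \<le> M'" by (simp add: M'_def)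
    with pos have "1 / M' \<le> 1 / (M / (1 + M * h))"
      by (intro divide_left_mono) (auto simp del: times_divide_eq_right)
    also have "\<dots> = 1 / M + h" using assms h by (simp add: field_simps)
    finally show ?thesis .
  qed
  moreover have "L - 1 / M - s = 3 * h" by (simp add: h_def)
  ultimately show thesis using h by (intro that[of "L - h" M']) linarith+
qed

lemma iteration_radii:
  fixes L' M' A \<rho> :: real
  assumes "0 < M'" "0 \<le> A" "0 < \<rho>" "A < \<rho> * (L' - 1 / M')"
  shows "0 \<le> 1 / (L' * M')" "1 / (L' * M') < 1"
    "A \<le> L' * (1 - 1 / (L' * M')) * (A / (L' - 1 / M'))"
    "1 / (L' * M') * A \<le> (1 - 1 / (L' * M')) * (A / (L' - 1 / M') / M')"
    "A / (L' - 1 / M') < \<rho>" "A < \<rho> * L'"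
proof -
  have "0 < \<rho> * (L' - 1 / M')" using assms(2,4) by linarith
  then have gap: "1 / M' < L'" using assms(3) by (simp add: zero_less_mult_iff)
  then have LM: "1 < L' * M'" using assms(1) by (simp add: field_simps)
  have "0 < L'" using assms(1) gap order_less_trans[of 0 "1 / M'" L'] by simp
  from LM show "0 \<le> 1 / (L' * M')" "1 / (L' * M') < 1" by simp_all
  have "L' * (1 - 1 / (L' * M')) = L' - 1 / M'" using assms(1) \<open>0 < L'\<close> LM by (simp add: field_simps)
  then show "A \<le> L' * (1 - 1 / (L' * M')) * (A / (L' - 1 / M'))" using gap by simp
  have "(1 - 1 / (L' * M')) / ((L' - 1 / M') * M') = 1 / (L' * M')"
    using assms(1) \<open>0 < L'\<close> LM by (simp add: field_simps)
  then show "1 / (L' * M') * A \<le> (1 - 1 / (L' * M')) * (A / (L' - 1 / M') / M')"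
    by (metis divide_divide_eq_left order_refl times_divide_eq_left times_divide_eq_right mult.commute)
  show "A / (L' - 1 / M') < \<rho>" using assms(4) gap by (simp add: pos_divide_less_eq mult.commute)
  have "\<rho> * (L' - 1 / M') \<le> \<rho> * L'" using assms(1,3) by (simp add: mult_left_mono)
  with assms(4) show "A < \<rho> * L'" by linarith
qed

lemma correction_step:
  assumes "0 < L'" "0 < M'"
    and f_open: "\<And>y. dist y (f x) < \<epsilon>f * L' \<Longrightarrow> \<exists>x'. dist x' x \<le> dist y (f x) / L' \<and> f x' = y"
    and G_open: "\<And>x'. dist x' x < \<epsilon>g * M' \<Longrightarrow> \<exists>z'. dist z' z \<le> dist x' x / M' \<and> x' \<in> G z'"
    and "norm r < \<epsilon>f * L'" "norm r / L' < \<epsilon>g * M'"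
  shows "\<exists>x' z'. x' \<in> G z' \<and> f x' = f x + r \<and> dist x' x \<le> norm r / L'
    \<and> dist z' z \<le> 1 / (L' * M') * norm r"
proof -
  obtain x' where x': "dist x' x \<le> norm r / L'" "f x' = f x + r"
    using f_open[of "f x + r"] assms(5) by (auto simp: dist_norm)
  then obtain z' where "dist z' z \<le> dist x' x / M'" "x' \<in> G z'"
    using G_open assms(6) by (meson le_less_trans)
  moreover have "dist x' x / M' \<le> 1 / (L' * M') * norm r"
    using x'(1) assms(1,2) by (simp add: divide_right_mono field_simps)
  ultimately show ?thesis using x' by (blast intro: order_trans)
qed

lemma minus_inverse_local_solution:
  fixes f :: "'x::banach \<Rightarrow> 'y::banach" and G :: "'y \<Rightarrow> 'x set"
  assumes L: "0 < L" and M: "0 < M" and "0 < \<epsilon>g"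
    and f_step: "\<And>L' x y. 0 < L' \<Longrightarrow> L' < L \<Longrightarrow> x \<in> X \<Longrightarrow> dist y (f x) < \<epsilon>f * L' \<Longrightarrow>
      \<exists>x'. dist x' x \<le> dist y (f x) / L' \<and> f x' = y"
    and G_step: "\<And>M' z x x'. 0 < M' \<Longrightarrow> M' < M \<Longrightarrow> x \<in> G z \<Longrightarrow> z \<in> Z \<Longrightarrow> x \<in> X \<Longrightarrow>
      dist x' x < \<epsilon>g * M' \<Longrightarrow> \<exists>z'. dist z' z \<le> dist x' x / M' \<and> x' \<in> G z'"
    and cont: "continuous_on X f"
    and closed: "closed (graph G \<inter> C)" and ZX: "Z \<times> X \<subseteq> C"
    and "u \<in> G z" and \<rho>: "0 < \<rho>" "\<rho> \<le> \<epsilon>f" "\<rho> \<le> \<epsilon>g * (M / 2)"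
    and X: "ball u \<rho> \<subseteq> X" and Z: "ball z (2 * \<rho> / M) \<subseteq> Z"
    and w: "dist w (f u - z) < \<rho> * (L - 1 / M)"
  shows "\<exists>x z'. dist x u < \<rho> \<and> x \<in> G z' \<and> w = f x - z'"
proof -
  define A where "A = dist w (f u - z)"
  have "0 \<le> A / \<rho>" "A / \<rho> < L - 1 / M"
    using w \<rho> by (simp_all add: A_def pos_divide_less_eq mult.commute)
  then obtain L' M' where L': "0 < L'" "L' < L" and M': "M / 2 \<le> M'" "M' < M"
    and gap: "A / \<rho> < L' - 1 / M'"
    using exists_smaller_rates[OF L M] by blast
  have "0 < M'" using M M'(1) by linarith
  have A_lt: "A < \<rho> * (L' - 1 / M')" using gap \<rho> by (simp add: pos_divide_less_eq mult.commute)
  have "0 \<le> A" by (simp add: A_def)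
  define rx where "rx = A / (L' - 1 / M')"
  note radii = iteration_radii[OF \<open>0 < M'\<close> \<open>0 \<le> A\<close> \<open>0 < \<rho>\<close> A_lt, folded rx_def]
  have "rx < \<rho>" "A < \<rho> * L'" using radii(5,6) .
  have "rx / M' < \<rho> / M'" using \<open>rx < \<rho>\<close> \<open>0 < M'\<close> by (simp add: divide_strict_right_mono)
  also have "\<dots> \<le> 2 * \<rho> / M" using M M' \<rho> by (simp add: field_simps)
  finally have cballs: "cball u rx \<subseteq> X" "cball z (rx / M') \<subseteq> Z"
    using X Z \<open>rx < \<rho>\<close> by (force simp: subset_eq)+
  have "\<rho> \<le> \<epsilon>g * M'" using \<rho>(3) mult_left_mono[OF M'(1) less_imp_le[OF \<open>0 < \<epsilon>g\<close>]] by linarith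
  have step: "\<exists>x' z''. x' \<in> G z'' \<and> f x' = f x + r \<and> dist x' x \<le> norm r / L'
      \<and> dist z'' z' \<le> 1 / (L' * M') * norm r"
    if x: "x \<in> G z'" "x \<in> cball u rx" "z' \<in> cball z (rx / M')" and r: "norm r \<le> A" for x z' r
  proof (rule correction_step[OF L'(1) \<open>0 < M'\<close>])
    from x cballs have "x \<in> X" "z' \<in> Z" by auto
    show "\<exists>x'. dist x' x \<le> dist y (f x) / L' \<and> f x' = y" if "dist y (f x) < \<epsilon>f * L'" for y
      using f_step[OF L' \<open>x \<in> X\<close> that] .
    show "\<exists>z''. dist z'' z' \<le> dist x' x / M' \<and> x' \<in> G z''" if "dist x' x < \<epsilon>g * M'" for x'
      using G_step[OF \<open>0 < M'\<close> M'(2) x(1) \<open>z' \<in> Z\<close> \<open>x \<in> X\<close> that] .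
    show "norm r < \<epsilon>f * L'" using r \<open>A < \<rho> * L'\<close> \<rho>(2) L'(1) by (smt (verit) mult_right_mono)
    have "norm r / L' < \<rho>" using r \<open>A < \<rho> * L'\<close> L'(1) by (simp add: pos_divide_less_eq)
    then show "norm r / L' < \<epsilon>g * M'" using \<open>\<rho> \<le> \<epsilon>g * M'\<close> by linarith
  qed
  have residual: "norm (w - (f u - z)) \<le> A" by (simp add: A_def dist_norm)
  have "graph G \<inter> cball z (rx / M') \<times> cball u rx = (graph G \<inter> C) \<inter> cball z (rx / M') \<times> cball u rx"
    using ZX cballs by blast
  then have "closed (graph G \<inter> cball z (rx / M') \<times> cball u rx)"
    using closed by (simp add: closed_Int closed_Times)
  moreover have "continuous_on (cball u rx) f" using cont cballs(1) by (rule continuous_on_subset)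
  ultimately obtain x z' where "x \<in> cball u rx" "x \<in> G z'" "w = f x - z'"
    using iterative_solution[OF L'(1) radii(1,2) \<open>u \<in> G z\<close> residual radii(3,4) step] by blast
  moreover from this(1) \<open>rx < \<rho>\<close> have "dist x u < \<rho>" by (simp add: dist_commute)
  ultimately show ?thesis by blast
qed

lemma lin_open_around_minus_inverseI:
  fixes f :: "'x::banach \<Rightarrow> 'y::banach" and G :: "'y \<Rightarrow> 'x set"
  assumes L: "0 < L" and M: "0 < M" and "0 < \<epsilon>f" "0 < \<epsilon>g" "0 < dx" "0 < dz"
    and f_step: "\<And>L' x y. 0 < L' \<Longrightarrow> L' < L \<Longrightarrow> x \<in> ball xb dx \<Longrightarrow> dist y (f x) < \<epsilon>f * L' \<Longrightarrow>
      \<exists>x'. dist x' x \<le> dist y (f x) / L' \<and> f x' = y"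
    and G_step: "\<And>M' z x x'. 0 < M' \<Longrightarrow> M' < M \<Longrightarrow> x \<in> G z \<Longrightarrow> z \<in> ball zb dz \<Longrightarrow>
      x \<in> ball xb dx \<Longrightarrow> dist x' x < \<epsilon>g * M' \<Longrightarrow> \<exists>z'. dist z' z \<le> dist x' x / M' \<and> x' \<in> G z'"
    and cont: "continuous_on (ball xb dx) f"
    and closed: "closed (graph G \<inter> C)" and "ball zb dz \<times> ball xb dx \<subseteq> C"
    and f_near: "\<And>x. x \<in> ball xb dx \<Longrightarrow> f x \<in> ball yb (dz / 4)"
  shows "lin_open_around (minus_inverse f G) (L - 1 / M) xb (yb - zb)"
proof (rule lin_open_around_ballI)
  fix \<rho> u v w
  assume \<rho>: "0 < \<rho>" "\<rho> < min \<epsilon>f (min (\<epsilon>g * (M / 2)) (min (dx / 2) (dz * M / 4)))"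
    and "v \<in> minus_inverse f G u" and u: "u \<in> ball xb (dx / 2)" and v: "v \<in> ball (yb - zb) (dz / 4)"
    and w: "dist w v < \<rho> * (L - 1 / M)"
  then obtain z where "u \<in> G z" "v = f u - z" by (auto simp: minus_inverse_def)
  then have "z - zb = (f u - yb) - (v - (yb - zb))" by (simp add: algebra_simps)
  then have "dist z zb \<le> dist (f u) yb + dist v (yb - zb)"
    by (metis dist_norm norm_triangle_ineq4)
  moreover have "f u \<in> ball yb (dz / 4)"
    using u subset_ball[of "dx / 2" dx xb] \<open>0 < dx\<close> by (intro f_near) auto
  ultimately have z: "dist z zb < dz / 2" using v by (simp add: dist_commute)
  have "2 * \<rho> / M < dz / 2" using \<rho> M by (simp add: field_simps)
  with u z \<rho> have "ball u \<rho> \<subseteq> ball xb dx" "ball z (2 * \<rho> / M) \<subseteq> ball zb dz"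
    by (auto simp: dist_commute intro!: ball_subset_ball_if_dist_le)
  then obtain x z' where "dist x u < \<rho>" "x \<in> G z'" "w = f x - z'"
    using minus_inverse_local_solution[where \<epsilon>f = \<epsilon>f and \<rho> = \<rho> and w = w, OF L M \<open>0 < \<epsilon>g\<close>
        f_step G_step cont closed \<open>ball zb dz \<times> ball xb dx \<subseteq> C\<close> \<open>u \<in> G z\<close>] \<rho> w \<open>v = f u - z\<close>
    by auto
  then show "\<exists>x. dist x u < \<rho> \<and> w \<in> minus_inverse f G x"
    by (auto simp: minus_inverse_def)
qed (use assms(2-6) in auto)

theorem corollary3p4:
  fixes f :: "'x::banach \<Rightarrow> 'y::banach"
    and G :: "'y \<Rightarrow> 'x set"
    and L M :: real and xb :: 'x and yb zb :: 'y
  assumes "L > 0" and "M > 0"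
    and "yb = f xb" and "(zb, xb) \<in> graph G"
    and "lipschitz_around f xb"
    and "locally_closed_around (graph G) (zb, xb)"
    and "lin_open_around (single_valued_map f) L xb yb"
    and "lin_open_around G M zb xb"
    and "L * M > 1"
  shows "lin_open_around (minus_inverse f G) (L - 1 / M) xb (yb - zb)"
proof -
  obtain \<delta>c where "0 < \<delta>c" and cont: "continuous_on (ball xb \<delta>c) f"
    using lipschitz_around_continuous_on_ball[OF assms(5)] .
  then have cont_xb: "continuous (at xb) f" by (simp add: continuous_on_interior)
  obtain \<epsilon>f \<delta>f where "0 < \<epsilon>f" "0 < \<delta>f" and f_step:
    "\<And>L' x y. 0 < L' \<Longrightarrow> L' < L \<Longrightarrow> x \<in> ball xb \<delta>f \<Longrightarrow> dist y (f x) < \<epsilon>f * L' \<Longrightarrow>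
       \<exists>x'. dist x' x \<le> dist y (f x) / L' \<and> f x' = y"
    using lin_open_around_function_stepE assms(3,7) cont_xb by metis
  obtain \<epsilon>g \<delta>g where "0 < \<epsilon>g" "0 < \<delta>g" and G_step:
    "\<And>M' z x x'. 0 < M' \<Longrightarrow> M' < M \<Longrightarrow> x \<in> G z \<Longrightarrow> z \<in> ball zb \<delta>g \<Longrightarrow> x \<in> ball xb \<delta>g \<Longrightarrow>
       dist x' x < \<epsilon>g * M' \<Longrightarrow> \<exists>z'. dist z' z \<le> dist x' x / M' \<and> x' \<in> G z'"
    using lin_open_around_stepE[OF assms(8)] by metis
  obtain \<delta>w where "0 < \<delta>w" and closed: "closed (graph G \<inter> cball zb \<delta>w \<times> cball xb \<delta>w)"
    using locally_closed_around_cball[OF assms(6)] .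
  define dz where "dz = min \<delta>g \<delta>w"
  have "0 < dz / 4" using \<open>0 < \<delta>g\<close> \<open>0 < \<delta>w\<close> by (simp add: dz_def)
  then obtain \<delta>y where "0 < \<delta>y" and f_near: "\<And>x. x \<in> ball xb \<delta>y \<Longrightarrow> f x \<in> ball yb (dz / 4)"
    using cont_xb assms(3) unfolding continuous_at_eps_delta by (metis dist_commute mem_ball)
  define dx where "dx = min (min \<delta>f \<delta>g) (min \<delta>c (min \<delta>w \<delta>y))"
  show ?thesis
  proof (rule lin_open_around_minus_inverseI[where dx = dx and dz = dz,
        OF assms(1,2) \<open>0 < \<epsilon>f\<close> \<open>0 < \<epsilon>g\<close> _ _ _ _ _ closed])
    show "continuous_on (ball xb dx) f" using cont by (rule continuous_on_subset) (auto simp: dx_def)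
    show "f x \<in> ball yb (dz / 4)" if "x \<in> ball xb dx" for x using that by (intro f_near) (simp add: dx_def)
  qed (use \<open>0 < \<delta>f\<close> \<open>0 < \<delta>g\<close> \<open>0 < \<delta>c\<close> \<open>0 < \<delta>w\<close> \<open>0 < \<delta>y\<close> in
        \<open>auto simp: dx_def dz_def intro!: f_step G_step\<close>)
qed

end
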